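(* Let $p\in(0,1/2)$, let $n\ge k\ge 1$ be integers and let $\delta\in(0,1)$. Consider any variable-length algorithm for computing $\mathsf{TH}_k(\mathbf{x})$ from noisy queries whose number of queries $M$ satisfies \[ \mathbb{E}[M\mid\mathbf{x}]\le\frac{(n-k+1)\log\frac{1}{4\delta}}{D_{\mathsf{KL}}(p\|1-p)} \] for every input instance $\mathbf{x}\in\{0,1\}^n$. Then the worst-case error probability of the algorithm, $\max_{\mathbf{x}\in\{0,1\}^n}\mathbb{P}(\widehat{\mathsf{TH}}_k\neq\mathsf{TH}_k(\mathbf{x})\mid\mathbf{x})$, is at least $\delta$.
   Context: For $\mathbf{x}=(x_1,\dots,x_n)\in\{0,1\}^n$, $\mathsf{TH}_k(\mathbf{x})=1$ if $\sum_i x_i\ge k$ and $0$ otherwise. Noisy query model: at each time step the algorithm chooses an index $i\in[n]$ (possibly depending on all previous responses) and observes $x_i\oplus Z$, where $Z\sim\mathsf{Bern}(p)$ is independent of everything else; $p$ is known. A variable-length algorithm may stop adaptively (so $M$ is random) and then outputs an estimate $\widehat{\mathsf{TH}}_k\in\{0,1\}$. $D_{\mathsf{KL}}(p\|1-p)=(1-2p)\log\frac{1-p}{p}$; $\log$ is the natural logarithm. *)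

theory Defs
  imports "HOL-Probability.Probability"
begin

text \<open>
  A (possibly randomised) variable-length algorithm is given by a random seed
  (distribution R on a type 'r) and, for every seed, a deterministic adaptive strategy
  mapping the list of responses observed so far to an action:
  Inl i  = query index i,   Inr b  = stop and output the estimate b.
\<close>

type_synonym 'r algorithm = "'r \<Rightarrow> bool list \<Rightarrow> nat + bool"

definition TH :: "nat \<Rightarrow> bool list \<Rightarrow> bool" where
  "TH k x \<longleftrightarrow> k \<le> count_list x True"

definition KL_flip :: "real \<Rightarrow> real" where
  "KL_flip p = (1 - 2 * p) * ln ((1 - p) / p)"

text \<open>Probability of observing response r when querying x_i: r = x_i XOR Z, Z ~ Bern p.\<close>
definition obs_prob :: "real \<Rightarrow> bool list \<Rightarrow> nat \<Rightarrow> bool \<Rightarrow> real" where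
  "obs_prob p x i r = (if r = x ! i then 1 - p else p)"

text \<open>Probability (for a fixed seed strategy S) that the first length rs responses are rs
  (zero if the strategy stopped before producing them).\<close>
definition path_prob :: "real \<Rightarrow> bool list \<Rightarrow> (bool list \<Rightarrow> nat + bool) \<Rightarrow> bool list \<Rightarrow> real" where
  "path_prob p x S rs =
     (\<Prod>j<length rs. (case S (take j rs) of Inl i \<Rightarrow> obs_prob p x i (rs ! j) | Inr _ \<Rightarrow> 0))"

text \<open>E[M | x] for a fixed seed: sum over t of P(M > t).\<close>
definition exp_queries_det :: "real \<Rightarrow> bool list \<Rightarrow> (bool list \<Rightarrow> nat + bool) \<Rightarrow> ennreal" where
  "exp_queries_det p x S =
     (\<Sum>\<^sub>\<infinity> rs. ennreal (if isl (S rs) then path_prob p x S rs else 0))"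

definition err_prob_det :: "real \<Rightarrow> nat \<Rightarrow> bool list \<Rightarrow> (bool list \<Rightarrow> nat + bool) \<Rightarrow> ennreal" where
  "err_prob_det p k x S =
     (\<Sum>\<^sub>\<infinity> rs. ennreal (if S rs = Inr (\<not> TH k x) then path_prob p x S rs else 0))"

definition exp_queries :: "real \<Rightarrow> bool list \<Rightarrow> 'r algorithm \<Rightarrow> 'r pmf \<Rightarrow> ennreal" where
  "exp_queries p x A R = (\<integral>\<^sup>+ \<omega>. exp_queries_det p x (A \<omega>) \<partial>measure_pmf R)"

definition err_prob :: "real \<Rightarrow> nat \<Rightarrow> bool list \<Rightarrow> 'r algorithm \<Rightarrow> 'r pmf \<Rightarrow> ennreal" where
  "err_prob p k x A R = (\<integral>\<^sup>+ \<omega>. err_prob_det p k x (A \<omega>) \<partial>measure_pmf R)"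

end

theory Submission
  imports Defs
begin

text \<open>
  Let x consist of k - 1 ones followed by n - k + 1 zeros, so that TH_k(x) = 0, and let j be the
  zero of x that the algorithm queries least often in expectation: at most ln(1/(4 delta)) / D
  times, where D = D_KL(p || 1 - p).  Flipping x_j gives an instance x' with TH_k(x') = 1.
  For a fixed random seed, the log-likelihood ratio of a response history under x' and under x
  changes by +-ln((1 - p)/p) exactly when j is queried, so by Wald's identity its expectation under
  x is -D E[M_j].  The Bretagnolle--Huber inequality then gives
  err(x) + err(x') >= exp(-D E[M_j]) / 2, and averaging over seeds with Jensen's inequality yields
  err(x) + err(x') >= 2 delta.  All sums over response histories are first taken up to a horizon T;
  since E[M] is finite, the probability of histories still running at time T becomes negligible.
\<close>

lemma finite_bool_lists_length_eq: "finite {rs :: bool list. length rs = t}"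
  using finite_lists_length_eq[of "UNIV :: bool set" t] by simp

lemma finite_bool_lists_length_less: "finite {rs :: bool list. length rs < t}"
  by (rule finite_subset[OF _ finite_lists_length_le[of "UNIV :: bool set" t]]) auto

lemma sum_bool_lists_length_less_Suc:
  "(\<Sum>rs | length rs < Suc t. g rs) =
     (\<Sum>rs | length rs < t. g rs) + (\<Sum>rs :: bool list | length rs = t. g rs)"
proof -
  have "{rs :: bool list. length rs < Suc t} = {rs. length rs < t} \<union> {rs. length rs = t}"
    by auto
  then show ?thesis
    by (simp only:) (rule sum.union_disjoint;
        simp add: finite_bool_lists_length_eq finite_bool_lists_length_less disjoint_iff)
qed

lemma sum_bool_lists_length_less_by_length:
  "(\<Sum>t<T. \<Sum>rs :: bool list | length rs = t. g rs) = (\<Sum>rs | length rs < T. g rs)"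
  by (induction T) (simp_all add: sum_bool_lists_length_less_Suc)

lemma sum_bool_lists_length_Suc:
  "(\<Sum>rs | length rs = Suc t. g rs) =
     (\<Sum>rs :: bool list | length rs = t. g (rs @ [True]) + g (rs @ [False]))"
proof -
  let ?L = "{rs :: bool list. length rs = t}"
  have "{rs :: bool list. length rs = Suc t} = (\<lambda>(rs, b). rs @ [b]) ` (?L \<times> UNIV)"
  proof (intro set_eqI iffI)
    fix rs :: "bool list" assume "rs \<in> {rs. length rs = Suc t}"
    then have "rs = butlast rs @ [last rs]" "length (butlast rs) = t"
      by (cases rs rule: rev_cases; simp)+
    then show "rs \<in> (\<lambda>(rs, b). rs @ [b]) ` (?L \<times> UNIV)"
      by (intro image_eqI[where x = "(butlast rs, last rs)"]) auto
  qed auto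
  moreover have "inj_on (\<lambda>(rs, b). rs @ [b :: bool]) (?L \<times> UNIV)"
    by (auto simp: inj_on_def)
  ultimately have "(\<Sum>rs | length rs = Suc t. g rs) = (\<Sum>(rs, b) \<in> ?L \<times> UNIV. g (rs @ [b]))"
    by (simp add: sum.reindex_cong[where l = "\<lambda>(rs, b). rs @ [b]"] case_prod_unfold)
  also have "\<dots> = (\<Sum>rs\<in>?L. \<Sum>b\<in>UNIV. g (rs @ [b]))"
    by (rule sum.cartesian_product[symmetric])
  finally show ?thesis
    by (simp add: UNIV_bool add.commute)
qed

text \<open>The histories at which a strategy run for at most T steps comes to rest.  Extensions of
  histories at which it stopped earlier are included too; they have probability zero.\<close>
definition truncated_leaves :: "(bool list \<Rightarrow> nat + bool) \<Rightarrow> nat \<Rightarrow> bool list set" where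
  "truncated_leaves S T = {rs. length rs < T \<and> \<not> isl (S rs)} \<union> {rs. length rs = T}"

lemma finite_truncated_leaves: "finite (truncated_leaves S T)"
  unfolding truncated_leaves_def
  using finite_bool_lists_length_less[of T] finite_bool_lists_length_eq[of T]
  by (auto intro: finite_subset)

lemma sum_truncated_leaves:
  "(\<Sum>rs\<in>truncated_leaves S T. g rs) =
     (\<Sum>rs | length rs < T. if isl (S rs) then 0 else g rs) + (\<Sum>rs | length rs = T. g rs)"
proof -
  have "(\<Sum>rs\<in>truncated_leaves S T. g rs) =
      (\<Sum>rs | length rs < T \<and> \<not> isl (S rs). g rs) + (\<Sum>rs | length rs = T. g rs)"
    unfolding truncated_leaves_def
    by (rule sum.union_disjoint)
      (auto intro: finite_subset[OF _ finite_bool_lists_length_less] simp: finite_bool_lists_length_eq)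
  also have "(\<Sum>rs | length rs < T \<and> \<not> isl (S rs). g rs) =
      (\<Sum>rs | length rs < T. if isl (S rs) then 0 else g rs)"
    by (rule sum.mono_neutral_cong_left) (auto simp: finite_bool_lists_length_less)
  finally show ?thesis .
qed

lemma sum_truncated_leaves_telescope:
  fixes g :: "bool list \<Rightarrow> 'a :: ab_group_add"
  assumes "\<And>rs b. \<not> isl (S rs) \<Longrightarrow> g (rs @ [b]) = 0"
  shows "(\<Sum>rs\<in>truncated_leaves S T. g rs) = g [] +
    (\<Sum>rs | length rs < T. if isl (S rs) then g (rs @ [True]) + g (rs @ [False]) - g rs else 0)"
proof (induction T)
  case 0
  show ?case
    by (simp add: sum_truncated_leaves)
next
  case (Suc T)
  let ?h = "\<lambda>rs. if isl (S rs) then g (rs @ [True]) + g (rs @ [False]) - g rs else 0"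
  have step: "(\<Sum>rs | length rs = T.
        (if isl (S rs) then 0 else g rs) + (g (rs @ [True]) + g (rs @ [False]))) =
      (\<Sum>rs | length rs = T. g rs) + (\<Sum>rs | length rs = T. ?h rs)"
    unfolding sum.distrib[symmetric] by (rule sum.cong) (auto simp: assms algebra_simps)
  have "(\<Sum>rs\<in>truncated_leaves S (Suc T). g rs) =
      (\<Sum>rs | length rs < T. if isl (S rs) then 0 else g rs) +
      (\<Sum>rs | length rs = T. (if isl (S rs) then 0 else g rs) + (g (rs @ [True]) + g (rs @ [False])))"
    by (simp add: sum_truncated_leaves sum_bool_lists_length_less_Suc sum_bool_lists_length_Suc
        sum.distrib add.assoc)
  also have "\<dots> = (\<Sum>rs\<in>truncated_leaves S T. g rs) + (\<Sum>rs | length rs = T. ?h rs)"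
    by (simp only: step sum_truncated_leaves add.assoc)
  also have "\<dots> = g [] + (\<Sum>rs | length rs < Suc T. ?h rs)"
    by (simp only: Suc.IH sum_bool_lists_length_less_Suc add.assoc)
  finally show ?case .
qed

lemma path_prob_Nil [simp]: "path_prob p x S [] = 1"
  unfolding path_prob_def by simp

lemma path_prob_snoc:
  "path_prob p x S (rs @ [b]) =
     path_prob p x S rs * (case S rs of Inl i \<Rightarrow> obs_prob p x i b | Inr _ \<Rightarrow> 0)"
proof -
  have "(\<Prod>t<length rs. case S (take t (rs @ [b])) of
            Inl i \<Rightarrow> obs_prob p x i ((rs @ [b]) ! t) | Inr _ \<Rightarrow> 0) = path_prob p x S rs"
    unfolding path_prob_def by (rule prod.cong) (auto simp: nth_append split: sum.split)
  then show ?thesis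
    by (simp add: path_prob_def prod.lessThan_Suc cong: sum.case_cong)
qed

lemma path_prob_nonneg: "0 \<le> p \<Longrightarrow> p \<le> 1 \<Longrightarrow> 0 \<le> path_prob p x S rs"
  unfolding path_prob_def obs_prob_def by (intro prod_nonneg) (auto split: sum.split)

lemma path_prob_snoc_stopped: "\<not> isl (S rs) \<Longrightarrow> path_prob p x S (rs @ [b]) = 0"
  by (cases "S rs") (auto simp: path_prob_snoc)

lemma path_prob_children:
  "path_prob p x S (rs @ [True]) + path_prob p x S (rs @ [False]) =
     (if isl (S rs) then path_prob p x S rs else 0)"
  by (cases "S rs") (auto simp: path_prob_snoc obs_prob_def algebra_simps)

lemma sum_truncated_leaves_path_prob: "(\<Sum>rs\<in>truncated_leaves S T. path_prob p x S rs) = 1"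
proof -
  have "(if isl (S rs) then path_prob p x S (rs @ [True]) + path_prob p x S (rs @ [False]) -
      path_prob p x S rs else 0) = 0" for rs
    using path_prob_children[of p x S rs] by simp
  then show ?thesis
    by (simp add: sum_truncated_leaves_telescope path_prob_snoc_stopped)
qed

definition log_likelihood_ratio :: "real \<Rightarrow> nat \<Rightarrow> (bool list \<Rightarrow> nat + bool) \<Rightarrow> bool list \<Rightarrow> real"
  where "log_likelihood_ratio p j S rs =
    (\<Sum>t<length rs. if S (take t rs) = Inl j
                    then (if rs ! t then ln ((1 - p) / p) else - ln ((1 - p) / p)) else 0)"

lemma log_likelihood_ratio_Nil [simp]: "log_likelihood_ratio p j S [] = 0"
  unfolding log_likelihood_ratio_def by simp

lemma log_likelihood_ratio_snoc:
  "log_likelihood_ratio p j S (rs @ [b]) = log_likelihood_ratio p j S rs +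
     (if S rs = Inl j then (if b then ln ((1 - p) / p) else - ln ((1 - p) / p)) else 0)"
proof -
  have "(\<Sum>t<length rs. if S (take t (rs @ [b])) = Inl j
           then (if (rs @ [b]) ! t then ln ((1 - p) / p) else - ln ((1 - p) / p)) else 0) =
        log_likelihood_ratio p j S rs"
    unfolding log_likelihood_ratio_def by (rule sum.cong) (auto simp: nth_append)
  then show ?thesis
    by (simp add: log_likelihood_ratio_def sum.lessThan_Suc)
qed

lemma path_prob_update_True:
  assumes "0 < p" "p < 1" "j < length x" "\<not> x ! j"
  shows "path_prob p (x[j := True]) S rs = path_prob p x S rs * exp (log_likelihood_ratio p j S rs)"
proof (induction rs rule: rev_induct)
  case Nil
  show ?case
    by simp
next
  case (snoc b rs)
  have "(case S rs of Inl i \<Rightarrow> obs_prob p (x[j := True]) i b | Inr _ \<Rightarrow> 0) =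
      (case S rs of Inl i \<Rightarrow> obs_prob p x i b | Inr _ \<Rightarrow> 0) *
      exp (if S rs = Inl j then (if b then ln ((1 - p) / p) else - ln ((1 - p) / p)) else 0)"
    using assms by (cases "S rs") (auto simp: obs_prob_def exp_minus)
  then show ?case
    by (simp add: path_prob_snoc log_likelihood_ratio_snoc snoc.IH exp_add)
qed

text \<open>Wald's identity: under x, every query of j adds
  p * ln((1-p)/p) - (1-p) * ln((1-p)/p) = -KL_flip p to the expected log-likelihood ratio.\<close>
lemma sum_truncated_leaves_log_likelihood_ratio:
  assumes "\<not> x ! j"
  shows "(\<Sum>rs\<in>truncated_leaves S T. path_prob p x S rs * log_likelihood_ratio p j S rs) =
    - KL_flip p * (\<Sum>rs | length rs < T. if S rs = Inl j then path_prob p x S rs else 0)"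
proof -
  let ?P = "path_prob p x S" and ?l = "log_likelihood_ratio p j S"
  have "(if isl (S rs) then ?P (rs @ [True]) * ?l (rs @ [True]) + ?P (rs @ [False]) * ?l (rs @ [False])
      - ?P rs * ?l rs else 0) = - KL_flip p * (if S rs = Inl j then ?P rs else 0)" for rs
  proof (cases "S rs")
    case (Inl i)
    then have "?P (rs @ [True]) * ?l (rs @ [True]) + ?P (rs @ [False]) * ?l (rs @ [False]) - ?P rs * ?l rs
        = ?P rs * (obs_prob p x i True * ?l (rs @ [True]) + obs_prob p x i False * ?l (rs @ [False])
            - ?l rs)"
      by (simp add: path_prob_snoc algebra_simps)
    then show ?thesis
      using Inl assms by (auto simp: log_likelihood_ratio_snoc obs_prob_def KL_flip_def algebra_simps)
  qed simp
  then show ?thesis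
    by (simp add: sum_truncated_leaves_telescope path_prob_snoc_stopped sum_distrib_left
)
qed

text \<open>Bretagnolle--Huber inequality for distributions P and Q = P * exp l on a finite set:
  the exponent on the left is -KL(P, Q).\<close>
lemma bretagnolle_huber_finite:
  fixes P l :: "'a \<Rightarrow> real"
  assumes "finite F" "\<And>a. a \<in> F \<Longrightarrow> 0 \<le> P a"
    and "(\<Sum>a\<in>F. P a) = 1" "(\<Sum>a\<in>F. P a * exp (l a)) = 1"
  shows "exp (\<Sum>a\<in>F. P a * l a) / 2 \<le> (\<Sum>a\<in>F. min (P a) (P a * exp (l a)))"
proof -
  let ?Q = "\<lambda>a. P a * exp (l a)"
  define C where "C = (\<Sum>a\<in>F. P a * exp (l a / 2))"
  have "F \<noteq> {}"
    using assms(3) by auto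
  then have "exp (\<Sum>a\<in>F. P a *\<^sub>R (l a / 2)) \<le> C"
    unfolding C_def by (rule convex_on_sum[OF assms(1) _ exp_convex]) (use assms in auto)
  then have half: "exp ((\<Sum>a\<in>F. P a * l a) / 2) \<le> C"
    by (simp add: sum_divide_distrib)
  have "exp (\<Sum>a\<in>F. P a * l a) = exp ((\<Sum>a\<in>F. P a * l a) / 2) * exp ((\<Sum>a\<in>F. P a * l a) / 2)"
    by (simp flip: exp_add)
  also have "\<dots> \<le> C\<^sup>2"
    unfolding power2_eq_square using half by (intro mult_mono) (auto intro: order_trans[OF exp_ge_zero])
  finally have jensen: "exp (\<Sum>a\<in>F. P a * l a) \<le> C\<^sup>2" .
  have nonneg: "0 \<le> min (P a) (?Q a)" "0 \<le> max (P a) (?Q a)" if "a \<in> F" for a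
    using assms(2)[OF that] by auto
  have "P a * exp (l a / 2) = sqrt (min (P a) (?Q a)) * sqrt (max (P a) (?Q a))" if "a \<in> F" for a
  proof -
    have "min (P a) (?Q a) * max (P a) (?Q a) = P a * ?Q a"
      by (simp add: min_def max_def)
    also have "\<dots> = (P a * exp (l a / 2))\<^sup>2"
      by (simp add: power2_eq_square flip: exp_add)
    finally show ?thesis
      using assms(2)[OF that] by (simp flip: real_sqrt_mult)
  qed
  then have "C\<^sup>2 = (\<Sum>a\<in>F. sqrt (min (P a) (?Q a)) * sqrt (max (P a) (?Q a)))\<^sup>2"
    unfolding C_def by (simp cong: sum.cong)
  also have "\<dots> \<le>
      (\<Sum>a\<in>F. (sqrt (min (P a) (?Q a)))\<^sup>2) * (\<Sum>a\<in>F. (sqrt (max (P a) (?Q a)))\<^sup>2)"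
    by (rule Cauchy_Schwarz_ineq_sum)
  also have "\<dots> = (\<Sum>a\<in>F. min (P a) (?Q a)) * (\<Sum>a\<in>F. max (P a) (?Q a))"
    using nonneg by (simp cong: sum.cong)
  also have "\<dots> \<le> (\<Sum>a\<in>F. min (P a) (?Q a)) * 2"
  proof (rule mult_left_mono)
    have "(\<Sum>a\<in>F. max (P a) (?Q a)) = (\<Sum>a\<in>F. P a + ?Q a - min (P a) (?Q a))"
      by (rule sum.cong) auto
    also have "\<dots> = 2 - (\<Sum>a\<in>F. min (P a) (?Q a))"
      using assms(3,4) by (simp add: sum.distrib sum_subtractf)
    finally show "(\<Sum>a\<in>F. max (P a) (?Q a)) \<le> 2"
      using assms(2) by (simp add: sum_nonneg)
    show "0 \<le> (\<Sum>a\<in>F. min (P a) (?Q a))"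
      using assms(2) by (simp add: sum_nonneg)
  qed
  finally show ?thesis
    using jensen by simp
qed

lemma le_enn2real_if_ennreal_le:
  assumes "ennreal a \<le> X" "X \<noteq> \<top>"
  shows "a \<le> enn2real X"
proof (cases "0 \<le> a")
  case True
  then show ?thesis
    using enn2real_mono[OF assms(1)] assms(2) by (simp add: top.not_eq_extremum)
next
  case False
  then show ?thesis
    using enn2real_nonneg[of X] by linarith
qed

definition exp_queries_at ::
    "real \<Rightarrow> bool list \<Rightarrow> (bool list \<Rightarrow> nat + bool) \<Rightarrow> nat \<Rightarrow> ennreal" where
  "exp_queries_at p x S j = (\<Sum>\<^sub>\<infinity> rs. ennreal (if S rs = Inl j then path_prob p x S rs else 0))"

lemma ennreal_sum_le_infsum:
  assumes "finite F" "\<And>a. 0 \<le> g a"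
  shows "ennreal (\<Sum>a\<in>F. g a) \<le> (\<Sum>\<^sub>\<infinity> a. ennreal (g a))"
proof -
  have "ennreal (\<Sum>a\<in>F. g a) = (\<Sum>\<^sub>\<infinity> a\<in>F. ennreal (g a))"
    using assms by simp
  also have "\<dots> \<le> (\<Sum>\<^sub>\<infinity> a. ennreal (g a))"
    by (rule infsum_mono_neutral) (auto intro: nonneg_summable_on_complete)
  finally show ?thesis .
qed

lemma infsum_sum_ennreal:
  fixes f :: "'i \<Rightarrow> 'a \<Rightarrow> ennreal"
  assumes "finite I"
  shows "(\<Sum>i\<in>I. \<Sum>\<^sub>\<infinity> a. f i a) = (\<Sum>\<^sub>\<infinity> a. \<Sum>i\<in>I. f i a)"
  using assms
proof (induction I rule: finite_induct)
  case (insert i I)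
  then show ?case
    by (simp add: infsum_add nonneg_summable_on_complete)
qed simp

lemma sum_exp_queries_at_le:
  assumes "finite Z"
  shows "(\<Sum>j\<in>Z. exp_queries_at p x S j) \<le> exp_queries_det p x S"
proof -
  have "(\<Sum>j\<in>Z. ennreal (if S rs = Inl j then path_prob p x S rs else 0)) \<le>
      ennreal (if isl (S rs) then path_prob p x S rs else 0)" for rs
  proof (cases "S rs")
    case (Inl i)
    then have "(\<Sum>j\<in>Z. ennreal (if S rs = Inl j then path_prob p x S rs else 0)) =
        (\<Sum>j\<in>Z. if i = j then ennreal (path_prob p x S rs) else 0)"
      by (intro sum.cong) auto
    then show ?thesis
      using Inl assms by (simp add: sum.delta)
  qed simp
  then show ?thesis
    unfolding exp_queries_at_def exp_queries_det_def infsum_sum_ennreal[OF assms]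
    by (intro infsum_mono nonneg_summable_on_complete) auto
qed

lemma exp_queries_at_le: "exp_queries_at p x S j \<le> exp_queries_det p x S"
  using sum_exp_queries_at_le[of "{j}"] by simp

lemma path_prob_mass_at_length_small:
  assumes "0 \<le> p" "p \<le> 1" "exp_queries_det p x S \<noteq> \<top>" "0 < e"
  obtains T where "(\<Sum>rs | length rs = T. path_prob p x S rs) < e"
proof -
  define q where "q t = (\<Sum>rs | length rs = t. if isl (S rs) then path_prob p x S rs else 0)" for t
  have q_nonneg: "0 \<le> q t" for t
    unfolding q_def using assms by (simp add: sum_nonneg path_prob_nonneg)
  have "ennreal (\<Sum>t<T. q t) \<le> exp_queries_det p x S" for T
    unfolding q_def exp_queries_det_def sum_bool_lists_length_less_by_length
    using assms by (intro ennreal_sum_le_infsum) (simp_all add: finite_bool_lists_length_less path_prob_nonneg)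
  then have "(\<Sum>t<T. q t) \<le> enn2real (exp_queries_det p x S)" for T
    using assms(3) by (rule le_enn2real_if_ennreal_le)
  then have "summable q"
    by (intro bounded_imp_summable[OF q_nonneg, of _ "enn2real (exp_queries_det p x S)"])
      (simp only: lessThan_Suc_atMost[symmetric])
  then have "q \<longlonglongrightarrow> 0"
    by (rule summable_LIMSEQ_zero)
  then have "eventually (\<lambda>t. q t < e) sequentially"
    using assms(4) by (rule order_tendstoD)
  then obtain t where "q t < e"
    by (auto simp: eventually_sequentially)
  moreover have "(\<Sum>rs | length rs = Suc t. path_prob p x S rs) = q t"
    unfolding q_def sum_bool_lists_length_Suc path_prob_children ..
  ultimately show ?thesis
    using that[of "Suc t"] by simp
qed

lemma KL_flip_pos:
  assumes "0 < p" "p < 1/2"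
  shows "0 < KL_flip p"
proof -
  have "1 < (1 - p) / p"
    using assms by (simp add: field_simps)
  then show ?thesis
    unfolding KL_flip_def using assms by simp
qed

lemma two_point_bound_truncated:
  assumes "0 < p" "p < 1" "j < length x" "\<not> x ! j"
  shows "exp (- KL_flip p * (\<Sum>rs | length rs < T. if S rs = Inl j then path_prob p x S rs else 0)) / 2
    \<le> (\<Sum>rs | length rs < T. if S rs = Inr True then path_prob p x S rs else 0) +
      (\<Sum>rs | length rs < T. if S rs = Inr False then path_prob p (x[j := True]) S rs else 0) +
      (\<Sum>rs | length rs = T. path_prob p x S rs)"
proof -
  let ?P = "path_prob p x S" and ?Q = "path_prob p (x[j := True]) S"
    and ?l = "log_likelihood_ratio p j S"
  have p01: "0 \<le> p" "p \<le> 1"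
    using assms(1,2) by auto
  have Q_eq: "?Q rs = ?P rs * exp (?l rs)" for rs
    by (rule path_prob_update_True[OF assms])
  have "exp (- KL_flip p * (\<Sum>rs | length rs < T. if S rs = Inl j then ?P rs else 0)) / 2 =
      exp (\<Sum>rs\<in>truncated_leaves S T. ?P rs * ?l rs) / 2"
    by (simp only: sum_truncated_leaves_log_likelihood_ratio[OF assms(4)])
  also have "\<dots> \<le> (\<Sum>rs\<in>truncated_leaves S T. min (?P rs) (?Q rs))"
    unfolding Q_eq
    using sum_truncated_leaves_path_prob[of p "x[j := True]" S T]
    by (intro bretagnolle_huber_finite finite_truncated_leaves)
      (simp_all add: path_prob_nonneg p01 sum_truncated_leaves_path_prob Q_eq)
  also have "\<dots> \<le> (\<Sum>rs | length rs < T. (if S rs = Inr True then ?P rs else 0) +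
        (if S rs = Inr False then ?Q rs else 0)) + (\<Sum>rs | length rs = T. ?P rs)"
  proof -
    have "(if isl (S rs) then 0 else min (?P rs) (?Q rs)) \<le>
        (if S rs = Inr True then ?P rs else 0) + (if S rs = Inr False then ?Q rs else 0)" for rs
      by (cases "S rs") (auto simp: path_prob_nonneg p01)
    then show ?thesis
      unfolding sum_truncated_leaves by (intro add_mono sum_mono) auto
  qed
  finally show ?thesis
    by (simp add: sum.distrib)
qed

lemma err_prob_det_flip_lower_bound:
  assumes "0 < p" "p < 1/2" "j < length x" "\<not> x ! j" "\<not> TH k x" "TH k (x[j := True])"
    and "exp_queries_det p x S \<noteq> \<top>"
  shows "ennreal (exp (- KL_flip p * enn2real (exp_queries_at p x S j)) / 2)
    \<le> err_prob_det p k x S + err_prob_det p k (x[j := True]) S"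
proof (rule ennreal_le_epsilon)
  fix e :: real
  assume "0 < e"
  let ?P = "path_prob p x S" and ?Q = "path_prob p (x[j := True]) S"
  have p01: "0 \<le> p" "p \<le> 1"
    using assms(1,2) by auto
  obtain T where tail: "(\<Sum>rs | length rs = T. ?P rs) < e"
    using path_prob_mass_at_length_small[OF p01 assms(7) \<open>0 < e\<close>] .
  define m where "m = (\<Sum>rs | length rs < T. if S rs = Inl j then ?P rs else 0)"
  define E1 where "E1 = (\<Sum>rs | length rs < T. if S rs = Inr True then ?P rs else 0)"
  define E2 where "E2 = (\<Sum>rs | length rs < T. if S rs = Inr False then ?Q rs else 0)"
  have "ennreal m \<le> exp_queries_at p x S j"
    unfolding m_def exp_queries_at_def
    by (intro ennreal_sum_le_infsum) (simp_all add: finite_bool_lists_length_less path_prob_nonneg p01)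
  moreover have "exp_queries_at p x S j \<noteq> \<top>"
    using exp_queries_at_le[of p x S j] assms(7) by (auto simp: top_unique)
  ultimately have "m \<le> enn2real (exp_queries_at p x S j)"
    by (rule le_enn2real_if_ennreal_le)
  then have "exp (- KL_flip p * enn2real (exp_queries_at p x S j)) / 2 \<le> exp (- KL_flip p * m) / 2"
    using KL_flip_pos[OF assms(1,2)] by simp
  also have "\<dots> \<le> E1 + E2 + e"
    using two_point_bound_truncated[of p j x S T] assms(1-4) tail by (simp add: m_def E1_def E2_def)
  finally have "ennreal (exp (- KL_flip p * enn2real (exp_queries_at p x S j)) / 2)
      \<le> ennreal (E1 + E2 + e)"
    by (rule ennreal_leI)
  also have "\<dots> = ennreal E1 + ennreal E2 + ennreal e"
    unfolding E1_def E2_def using \<open>0 < e\<close>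
    by (simp add: ennreal_plus sum_nonneg path_prob_nonneg p01)
  also have "\<dots> \<le> err_prob_det p k x S + err_prob_det p k (x[j := True]) S + ennreal e"
    unfolding E1_def E2_def err_prob_det_def using assms(5,6)
    by (intro add_mono order_refl)
      (simp_all add: ennreal_sum_le_infsum finite_bool_lists_length_less path_prob_nonneg p01)
  finally show "ennreal (exp (- KL_flip p * enn2real (exp_queries_at p x S j)) / 2)
      \<le> err_prob_det p k x S + err_prob_det p k (x[j := True]) S + ennreal e" .
qed

lemma exp_neg_nn_integral_le:
  fixes m :: "'a \<Rightarrow> ennreal"
  assumes "0 \<le> D" "(\<integral>\<^sup>+\<omega>. m \<omega> \<partial>measure_pmf R) \<noteq> \<top>"
  shows "ennreal (exp (- D * enn2real (\<integral>\<^sup>+\<omega>. m \<omega> \<partial>measure_pmf R)))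
    \<le> (\<integral>\<^sup>+\<omega>. ennreal (exp (- D * enn2real (m \<omega>))) \<partial>measure_pmf R)"
proof -
  define c where "c = enn2real (\<integral>\<^sup>+\<omega>. m \<omega> \<partial>measure_pmf R)"
  define K where "K = D * exp (- D * c)"
  have "AE \<omega> in measure_pmf R. m \<omega> \<noteq> \<top>"
    using nn_integral_PInf_AE[of m "measure_pmf R"] assms(2) by simp
  then have "(\<integral>\<^sup>+\<omega>. ennreal (enn2real (m \<omega>)) \<partial>measure_pmf R) =
      (\<integral>\<^sup>+\<omega>. m \<omega> \<partial>measure_pmf R)"
    by (intro nn_integral_cong_AE) (auto simp: less_top)
  also have "\<dots> = ennreal c"
    using assms(2) by (simp add: c_def less_top)
  finally have integral_m:
    "(\<integral>\<^sup>+\<omega>. ennreal (enn2real (m \<omega>)) \<partial>measure_pmf R) = ennreal c" .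
  \<comment> \<open>the tangent line of the convex function t \<mapsto> exp (- D t) at c\<close>
  have tangent: "exp (- D * c) + K * c \<le> exp (- D * t) + K * t" for t
  proof -
    have "exp (- D * c) * (1 + (D * c - D * t)) \<le> exp (- D * c) * exp (D * c - D * t)"
      by (intro mult_left_mono exp_ge_add_one_self) auto
    then show ?thesis
      by (simp add: K_def algebra_simps flip: exp_add)
  qed
  have K_nonneg: "0 \<le> K" and c_nonneg: "0 \<le> c"
    using assms(1) by (simp_all add: K_def c_def)
  have "ennreal (exp (- D * c)) + ennreal (K * c)
      = (\<integral>\<^sup>+\<omega>. ennreal (exp (- D * c) + K * c) \<partial>measure_pmf R)"
    using K_nonneg c_nonneg by (simp add: measure_pmf.emeasure_space_1 ennreal_plus)
  also have "\<dots> \<le> (\<integral>\<^sup>+\<omega>. ennreal (exp (- D * enn2real (m \<omega>))) +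
      ennreal K * ennreal (enn2real (m \<omega>)) \<partial>measure_pmf R)"
    using K_nonneg tangent
    by (intro nn_integral_mono) (simp add: ennreal_leI flip: ennreal_plus ennreal_mult)
  also have "\<dots> =
      (\<integral>\<^sup>+\<omega>. ennreal (exp (- D * enn2real (m \<omega>))) \<partial>measure_pmf R) + ennreal (K * c)"
    using K_nonneg c_nonneg by (simp add: nn_integral_add nn_integral_cmult integral_m ennreal_mult)
  finally show ?thesis
    by (simp add: c_def ennreal_add_left_cancel_le add.commute[of _ "ennreal (K * _)"])
qed

lemma err_prob_flip_lower_bound:
  assumes "0 < p" "p < 1/2" "j < length x" "\<not> x ! j" "\<not> TH k x" "TH k (x[j := True])"
    and "exp_queries p x A R \<noteq> \<top>"
  shows "ennreal (exp (- KL_flip p *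
      enn2real (\<integral>\<^sup>+\<omega>. exp_queries_at p x (A \<omega>) j \<partial>measure_pmf R)) / 2)
    \<le> err_prob p k x A R + err_prob p k (x[j := True]) A R"
proof -
  let ?m = "\<lambda>\<omega>. exp_queries_at p x (A \<omega>) j"
  have finite_seed: "AE \<omega> in measure_pmf R. exp_queries_det p x (A \<omega>) \<noteq> \<top>"
    using nn_integral_PInf_AE[of "\<lambda>\<omega>. exp_queries_det p x (A \<omega>)" "measure_pmf R"] assms(7)
    by (simp add: exp_queries_def)
  have "(\<integral>\<^sup>+\<omega>. ?m \<omega> \<partial>measure_pmf R) \<le> exp_queries p x A R"
    unfolding exp_queries_def by (intro nn_integral_mono exp_queries_at_le)
  then have "(\<integral>\<^sup>+\<omega>. ?m \<omega> \<partial>measure_pmf R) \<noteq> \<top>"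
    using assms(7) by (auto simp: top_unique)
  then have "ennreal (exp (- KL_flip p * enn2real (\<integral>\<^sup>+\<omega>. ?m \<omega> \<partial>measure_pmf R))) / 2
      \<le> (\<integral>\<^sup>+\<omega>. ennreal (exp (- KL_flip p * enn2real (?m \<omega>))) \<partial>measure_pmf R) / 2"
    using KL_flip_pos[OF assms(1,2)] by (intro divide_right_mono_ennreal exp_neg_nn_integral_le) auto
  also have "\<dots> =
      (\<integral>\<^sup>+\<omega>. ennreal (exp (- KL_flip p * enn2real (?m \<omega>)) / 2) \<partial>measure_pmf R)"
    by (subst nn_integral_divide[symmetric]) (simp_all add: ennreal_divide_numeral)
  also have "\<dots> \<le> (\<integral>\<^sup>+\<omega>. err_prob_det p k x (A \<omega>) + err_prob_det p k (x[j := True]) (A \<omega>)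
      \<partial>measure_pmf R)"
    by (intro nn_integral_mono_AE eventually_mono[OF finite_seed]
        err_prob_det_flip_lower_bound[OF assms(1-6)])
  also have "\<dots> = err_prob p k x A R + err_prob p k (x[j := True]) A R"
    unfolding err_prob_def by (simp add: nn_integral_add)
  finally show ?thesis
    by (simp add: ennreal_divide_numeral)
qed

lemma count_list_update_True:
  assumes "j < length xs" "\<not> xs ! j"
  shows "count_list (xs[j := True]) True = Suc (count_list xs True)"
proof -
  have "count_list xs True = count_list (take j xs @ xs ! j # drop (Suc j) xs) True"
    using assms(1) by (simp flip: id_take_nth_drop)
  moreover have "xs[j := True] = take j xs @ True # drop (Suc j) xs"
    using assms(1) by (rule upd_conv_take_nth_drop)
  ultimately show ?thesis
    using assms(2) by simp
qed

lemma sum_nn_integral_exp_queries_at_le: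
  assumes "finite Z"
  shows "(\<Sum>j\<in>Z. \<integral>\<^sup>+\<omega>. exp_queries_at p x (A \<omega>) j \<partial>measure_pmf R) \<le> exp_queries p x A R"
  unfolding exp_queries_def using assms
  by (simp add: nn_integral_sum[symmetric] nn_integral_mono sum_exp_queries_at_le)

lemma obtain_rarely_queried_index:
  fixes N :: "'a \<Rightarrow> ennreal"
  assumes "finite Z" "Z \<noteq> {}" "(\<Sum>j\<in>Z. N j) \<le> E" "E \<noteq> \<top>"
    and "enn2real E \<le> real (card Z) * ln (1 / (4 * \<delta>)) / D" "0 < D" "0 < \<delta>"
  obtains j where "j \<in> Z" "4 * \<delta> \<le> exp (- D * enn2real (N j))"
proof -
  define j where "j = arg_min_on N Z"
  have "j \<in> Z"
    unfolding j_def using assms(1,2) by (rule arg_min_if_finite)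
  have "of_nat (card Z) * N j \<le> E"
    using sum_bounded_below[of Z "N j" N] arg_min_least[OF assms(1,2)] assms(3)
    unfolding j_def by (meson order_trans)
  moreover have card_pos: "0 < card Z"
    using assms(1,2) by (simp add: card_gt_0_iff)
  ultimately have "real (card Z) * enn2real (N j) \<le> enn2real E"
    using assms(4) enn2real_mono[of "of_nat (card Z) * N j" E]
    by (simp add: enn2real_mult top.not_eq_extremum)
  then have "real (card Z) * enn2real (N j) \<le> real (card Z) * (ln (1 / (4 * \<delta>)) / D)"
    using assms(5) by simp
  then have "D * enn2real (N j) \<le> ln (1 / (4 * \<delta>))"
    using card_pos assms(6) by (simp add: field_simps)
  then have "ln (4 * \<delta>) \<le> - D * enn2real (N j)"
    using assms(7) by (simp add: ln_div)
  then have "exp (ln (4 * \<delta>)) \<le> exp (- D * enn2real (N j))"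
    by simp
  then show ?thesis
    using that[OF \<open>j \<in> Z\<close>] assms(7) by simp
qed

lemma threshold_instance:
  assumes "1 \<le> k" "k \<le> n"
  defines "x \<equiv> replicate (k - 1) True @ replicate (n - (k - 1)) False"
  shows "length x = n" "\<not> TH k x"
    and "j \<in> {k - 1..<n} \<Longrightarrow> j < length x \<and> \<not> x ! j \<and> TH k (x[j := True])"
proof -
  have count: "count_list x True = k - 1"
    using assms(2) by (simp add: x_def count_list_eq_length_filter)
  show "length x = n" "\<not> TH k x"
    using assms count by (simp_all add: x_def TH_def)
  assume "j \<in> {k - 1..<n}"
  then have "j < length x" "\<not> x ! j"
    by (auto simp: x_def nth_append)
  then show "j < length x \<and> \<not> x ! j \<and> TH k (x[j := True])"
    using count assms(1) by (simp add: TH_def count_list_update_True)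
qed

lemma ennreal_le_one_of_sum:
  assumes "ennreal (2 * d) \<le> a + b"
  shows "ennreal d \<le> a \<or> ennreal d \<le> b"
proof (rule ccontr)
  assume "\<not> ?thesis"
  then have "a + b < ennreal (d + d)"
    by (intro add_mono_ennreal) (auto simp: not_le)
  with assms show False
    by (simp add: not_le)
qed

theorem proposition5:
  fixes p \<delta> :: real and n k :: nat and A :: "'r algorithm" and R :: "'r pmf"
  assumes "0 < p" "p < 1/2" "1 \<le> k" "k \<le> n" "0 < \<delta>" "\<delta> < 1"
    and "\<forall>\<omega> h i. A \<omega> h = Inl i \<longrightarrow> i < n"
    and "\<forall>x. length x = n \<longrightarrow>
           exp_queries p x A R \<noteq> \<infinity> \<and>
           enn2real (exp_queries p x A R)
             \<le> (real n - real k + 1) * ln (1 / (4 * \<delta>)) / KL_flip p"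
  shows "\<exists>x. length x = n \<and> ennreal \<delta> \<le> err_prob p k x A R"
proof -
  \<comment> \<open>The bound i < n on queried indices is not needed: an out-of-range query sees the same
    unspecified bit under x and under x[j := True].\<close>
  define x where "x = replicate (k - 1) True @ replicate (n - (k - 1)) False"
  define Z where "Z = {k - 1..<n}"
  note x = threshold_instance[OF assms(3,4), folded x_def Z_def]
  have Z: "finite Z" "Z \<noteq> {}" "real (card Z) = real n - real k + 1"
    using assms(3,4) by (auto simp: Z_def of_nat_diff)
  have finite_queries: "exp_queries p x A R \<noteq> \<top>"
    and "enn2real (exp_queries p x A R) \<le> real (card Z) * ln (1 / (4 * \<delta>)) / KL_flip p"
    using assms(8) x(1) Z(3) by auto
  then obtain j where "j \<in> Z"
    and j: "4 * \<delta> \<le>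
      exp (- KL_flip p * enn2real (\<integral>\<^sup>+\<omega>. exp_queries_at p x (A \<omega>) j \<partial>measure_pmf R))"
    by (rule obtain_rarely_queried_index[OF Z(1,2) sum_nn_integral_exp_queries_at_le[OF Z(1)] _ _
        KL_flip_pos[OF assms(1,2)] assms(5)])
  have "ennreal (2 * \<delta>) \<le> ennreal (exp (- KL_flip p *
      enn2real (\<integral>\<^sup>+\<omega>. exp_queries_at p x (A \<omega>) j \<partial>measure_pmf R)) / 2)"
    using j by (intro ennreal_leI) simp
  also have "\<dots> \<le> err_prob p k x A R + err_prob p k (x[j := True]) A R"
    using x(3)[OF \<open>j \<in> Z\<close>]
    by (intro err_prob_flip_lower_bound[OF assms(1,2) _ _ x(2) _ finite_queries]) auto
  finally show ?thesis
    using ennreal_le_one_of_sum[of \<delta>] x(1) by (metis length_list_update)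
qed

end
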